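(* Let $\Omega=[0,1]$, $n\ge1$, and let $p_1,\dots,p_{n+1}\in(0,1)$ be distinct. Let $q_n\in[0,1)$ be the fractional part of $-(p_1+\dots+p_n)$ and assume $p_{n+1}\neq q_n$. Let $I_{n+1}=\{x\in[0,1]: G_{\{p_1,\dots,p_{n+1}\}}0_\Omega(x)\neq G_{\{p_1,\dots,p_n\}}0_\Omega(x)\}$. Then $I_{n+1}=(0,q_n)$ if $p_{n+1}<q_n$, and $I_{n+1}=(q_n,1)$ if $p_{n+1}>q_n$. Consequently, if $p_1,\dots,p_{n+1}$ are independent random variables uniformly distributed on $(0,1)$, then the length of $I_{n+1}$ has probability density $x\mapsto 2x$ on $[0,1]$, independently of $n\ge1$.
   Context: Let $\Omega=[\alpha,\beta]$ be a compact interval. An $\Omega$-tropical series is a function $F:\Omega\to[0,\infty)$ with $F(\alpha)=F(\beta)=0$ that can be written as $F(z)=\inf_{v\in\mathbb{Z}}(a_v+zv)$ for some real numbers $a_v$. For points $p_1,\dots,p_n\in(\alpha,\beta)$, $G_{\{p_1,\dots,p_n\}}0_\Omega$ denotes the pointwise minimal $\Omega$-tropical series that is non-smooth (not differentiable) at each $p_i$ (this minimum exists and is such a series). *)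

theory Defs
  imports "HOL-Probability.Probability"
begin

text \<open>An \<Omega>-tropical series on \<Omega> = [\<alpha>,\<beta>]: a function F with values in [0,\<infinity>) on \<Omega>,
  vanishing at both endpoints, of the form F z = inf over v in Z of (a v + z v)
  for some real coefficients a v (the infimum being finite on \<Omega>).
  Values of F outside \<Omega> are irrelevant.\<close>
definition tropical_series :: "real \<Rightarrow> real \<Rightarrow> (real \<Rightarrow> real) \<Rightarrow> bool" where
  "tropical_series \<alpha> \<beta> F \<longleftrightarrow>
     (\<forall>z\<in>{\<alpha>..\<beta>}. F z \<ge> 0) \<and> F \<alpha> = 0 \<and> F \<beta> = 0 \<and>
     (\<exists>a :: int \<Rightarrow> real. \<forall>z\<in>{\<alpha>..\<beta>}.
         bdd_below (range (\<lambda>v. a v + z * real_of_int v)) \<and>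
         F z = (INF v. a v + z * real_of_int v))"

text \<open>G_P 0_\<Omega>: the pointwise minimal \<Omega>-tropical series that is not differentiable at
  any point of P.  Since this minimal series exists, its value at z is the pointwise
  infimum of the values of all such series.\<close>
definition G :: "real \<Rightarrow> real \<Rightarrow> real set \<Rightarrow> real \<Rightarrow> real" where
  "G \<alpha> \<beta> P z = Inf {F z | F. tropical_series \<alpha> \<beta> F \<and> (\<forall>p\<in>P. \<not> F differentiable (at p))}"

end

theory Submission
  imports Defs
begin

text \<open>A tropical series on [0,1] is an infimum of lines with integer slopes: it is concave and
  at each of its kinks the slope drops by a positive integer.  Let tent b z = min ((1 - b) z)
  (b (1 - z)), whose slope drops by 1 at b.  For a finite set P the sum of the tents at the points
  of P has slopes in Z - \<Sum>P; one more tent at q = frac (- \<Sum>P) makes all slopes integers, and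
  this tent sum is G_P.  Indeed, removing the tents at P from an admissible series leaves a
  function that is still concave (its slope drops by at least 1 at every point of P), vanishes
  at 0 and 1, and has slopes congruent to -q modulo 1; hence it lies above the tent at q.

  Adding a point b to P replaces the tent at q by the tents at b and at frac (q - b); these two
  functions agree exactly outside (0, q) if b < q, and outside (q, 1) if b > q.  For independent
  uniform points, q is again uniform (the fractional part of a sum of uniforms), so the length
  of the interval is q with probability q and 1 - q with probability 1 - q, whence
  P(length \<le> t) = t^2.\<close>

section \<open>Tents\<close>

definition tent :: "real \<Rightarrow> real \<Rightarrow> real" where
  "tent b z = min ((1 - b) * z) (b * (1 - z))"

lemma tent_nonneg: "b \<in> {0..1} \<Longrightarrow> z \<in> {0..1} \<Longrightarrow> tent b z \<ge> 0"
  by (auto simp: tent_def)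

lemma tent_at_0: "b \<ge> 0 \<Longrightarrow> tent b 0 = 0"
  and tent_at_1: "b \<le> 1 \<Longrightarrow> tent b 1 = 0"
  by (auto simp: tent_def)

lemma tent_left: "x \<le> b \<Longrightarrow> b \<le> 1 \<Longrightarrow> tent b x = (1 - b) * x"
proof -
  assume "x \<le> b" "b \<le> 1"
  moreover have "(1 - b) * x - b * (1 - x) = x - b" by (simp add: algebra_simps)
  ultimately show ?thesis by (simp add: tent_def)
qed

lemma tent_right: "b \<le> x \<Longrightarrow> tent b x = b * (1 - x)"
proof -
  assume "b \<le> x"
  moreover have "(1 - b) * x - b * (1 - x) = x - b" by (simp add: algebra_simps)
  ultimately show ?thesis by (simp add: tent_def)
qed

lemma tent_reflect: "tent b (1 - x) = tent (1 - b) x"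
  by (simp add: tent_def min.commute)

lemma tent_has_derivative_left:
  "z < b \<Longrightarrow> b \<le> 1 \<Longrightarrow> (tent b has_real_derivative (1 - b)) (at z)"
  by (rule has_field_derivative_transform_within_open[where S="{..<b}" and f="\<lambda>x. (1 - b) * x"])
     (auto intro!: derivative_eq_intros simp: tent_left)

lemma tent_has_derivative_right:
  "b < z \<Longrightarrow> (tent b has_real_derivative (- b)) (at z)"
  by (rule has_field_derivative_transform_within_open[where S="{b<..}" and f="\<lambda>x. b * (1 - x)"])
     (auto intro!: derivative_eq_intros simp: tent_right)

lemma tent_differentiable: "z \<noteq> b \<Longrightarrow> b \<le> 1 \<Longrightarrow> tent b differentiable (at z)"
  using tent_has_derivative_left[of z b] tent_has_derivative_right[of b z]
  by (cases "z < b") (auto simp: real_differentiable_def)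

text \<open>A derivative D at the peak would make p a local maximum of both tent p z + (p - 1) z
  and tent p z + p z, forcing D = 1 - p and D = - p.\<close>
lemma tent_not_differentiable: "\<not> tent p differentiable (at p)"
proof
  assume "tent p differentiable (at p)"
  then obtain D where D: "(tent p has_real_derivative D) (at p)"
    by (auto simp: real_differentiable_def)
  have "D + (p - 1) = 0"
  proof (rule DERIV_local_max[OF _ zero_less_one])
    show "((\<lambda>x. tent p x + (p - 1) * x) has_real_derivative (D + (p - 1))) (at p)"
      by (rule derivative_eq_intros D | simp)+
    have "tent p y + (p - 1) * y = min 0 (p - y)" for y
      by (simp add: tent_def min_add_distrib_right algebra_simps)
    then show "\<forall>y. \<bar>p - y\<bar> < 1 \<longrightarrow> tent p y + (p - 1) * y \<le> tent p p + (p - 1) * p"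
      by simp
  qed
  moreover have "D + p = 0"
  proof (rule DERIV_local_max[OF _ zero_less_one])
    show "((\<lambda>x. tent p x + p * x) has_real_derivative (D + p)) (at p)"
      by (rule derivative_eq_intros D | simp)+
    have "tent p y + p * y = min y p" for y
      by (simp add: tent_def min_add_distrib_right algebra_simps)
    then show "\<forall>y. \<bar>p - y\<bar> < 1 \<longrightarrow> tent p y + p * y \<le> tent p p + p * p"
      by simp
  qed
  ultimately show False by simp
qed

section \<open>Sums of tents are tropical series\<close>

lemma tropical_series_of_lines:
  fixes F :: "real \<Rightarrow> real" and c :: "'s \<Rightarrow> real" and k :: "'s \<Rightarrow> int"
  assumes fin: "finite S"
    and le: "\<And>z s. z \<in> {0..1} \<Longrightarrow> s \<in> S \<Longrightarrow> F z \<le> c s + z * k s"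
    and ex: "\<And>z. z \<in> {0..1} \<Longrightarrow> \<exists>s\<in>S. F z = c s + z * k s"
  shows "\<exists>a::int\<Rightarrow>real. \<forall>z\<in>{0..1}. bdd_below (range (\<lambda>v. a v + z * real_of_int v)) \<and>
            F z = (INF v. a v + z * real_of_int v)"
proof -
  define C where "C = (\<Sum>s\<in>S. \<bar>c s\<bar> + \<bar>real_of_int (k s)\<bar>)"
  text \<open>Slopes not occurring in S get an intercept so large that the line stays above F.\<close>
  define a where "a v = (if v \<in> k ` S then Min (c ` {s\<in>S. k s = v}) else C + \<bar>real_of_int v\<bar>)" for v
  have abs_le: "\<bar>z * r\<bar> \<le> \<bar>r\<bar>" if "z \<in> {0..1}" for z r :: real
    using that by (auto simp: abs_mult intro!: mult_left_le_one_le)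
  have below: "F z \<le> a v + z * of_int v" if z: "z \<in> {0..1}" for z :: real and v
  proof (cases "v \<in> k ` S")
    case True
    then have "a v \<in> c ` {s\<in>S. k s = v}"
      using fin by (simp add: a_def, intro Min_in) auto
    then obtain s where s: "s \<in> S" "k s = v" "a v = c s" by auto
    show ?thesis using le[OF z s(1)] s by simp
  next
    case False
    obtain s where s: "s \<in> S" "F z = c s + z * k s" using ex[OF z] by auto
    have "c s + z * k s \<le> \<bar>c s\<bar> + \<bar>real_of_int (k s)\<bar>" using abs_le[OF z, of "k s"] by linarith
    also have "\<dots> \<le> C" unfolding C_def by (rule member_le_sum[OF s(1)]) (auto simp: fin)
    finally show ?thesis using s abs_le[OF z, of v] False unfolding a_def by auto
  qed
  have attained: "\<exists>v. a v + z * of_int v \<le> F z" if z: "z \<in> {0..1}" for z :: real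
  proof -
    obtain s where s: "s \<in> S" "F z = c s + z * k s" using ex[OF z] by auto
    have "a (k s) \<le> c s" unfolding a_def using s(1) fin by (auto intro!: Min_le)
    thus ?thesis using s by (intro exI[of _ "k s"]) simp
  qed
  show ?thesis
  proof (intro exI[of _ a] ballI conjI)
    fix z :: real assume z: "z \<in> {0..1}"
    show bdd: "bdd_below (range (\<lambda>v. a v + z * real_of_int v))"
      using below[OF z] by (intro bdd_belowI[of _ "F z"]) auto
    obtain v where "a v + z * of_int v \<le> F z" using attained[OF z] by auto
    then show "F z = (INF v. a v + z * real_of_int v)"
      using cINF_lower[OF bdd, of v] by (intro antisym cINF_greatest below[OF z]) auto
  qed
qed

lemma sum_tent_split:
  assumes "finite I" "T \<subseteq> I"
  shows "(\<Sum>i\<in>T. (1 - w i) * z) + (\<Sum>i\<in>I-T. w i * (1 - z)) =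
         (\<Sum>i\<in>I-T. w i) + z * (real (card T) - (\<Sum>i\<in>I. w i))"
proof -
  have "(\<Sum>i\<in>I. w i) = (\<Sum>i\<in>T. w i) + (\<Sum>i\<in>I-T. w i)"
    using sum.subset_diff[OF assms(2,1)] by (simp add: add.commute)
  then show ?thesis
    by (simp add: sum_subtractf sum_distrib_left sum_distrib_right algebra_simps)
qed

text \<open>A sum of tents is the minimum of the lines obtained by choosing, for each tent,
  its left or its right branch; the branches chosen by the index set T give the line below.\<close>
lemma sum_tent_le_line:
  assumes "finite I" "T \<subseteq> I"
  shows "(\<Sum>i\<in>I. tent (w i) z) \<le> (\<Sum>i\<in>I-T. w i) + z * (real (card T) - (\<Sum>i\<in>I. w i))"
proof -
  have "(\<Sum>i\<in>I. tent (w i) z) = (\<Sum>i\<in>T. tent (w i) z) + (\<Sum>i\<in>I-T. tent (w i) z)"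
    using sum.subset_diff[OF assms(2,1)] by (simp add: add.commute)
  also have "\<dots> \<le> (\<Sum>i\<in>T. (1 - w i) * z) + (\<Sum>i\<in>I-T. w i * (1 - z))"
    by (intro add_mono sum_mono) (auto simp: tent_def)
  finally show ?thesis using sum_tent_split[OF assms] by simp
qed

lemma sum_tent_eq_line:
  assumes fin: "finite I"
  obtains T where "T \<subseteq> I"
    "(\<Sum>i\<in>I. tent (w i) z) = (\<Sum>i\<in>I-T. w i) + z * (real (card T) - (\<Sum>i\<in>I. w i))"
proof
  define T where "T = {i\<in>I. (1 - w i) * z \<le> w i * (1 - z)}"
  show T: "T \<subseteq> I" by (auto simp: T_def)
  have "(\<Sum>i\<in>I. tent (w i) z) = (\<Sum>i\<in>T. tent (w i) z) + (\<Sum>i\<in>I-T. tent (w i) z)"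
    using sum.subset_diff[OF T fin] by (simp add: add.commute)
  also have "\<dots> = (\<Sum>i\<in>T. (1 - w i) * z) + (\<Sum>i\<in>I-T. w i * (1 - z))"
    by (intro arg_cong2[where f="(+)"] sum.cong) (auto simp: tent_def T_def)
  finally show "(\<Sum>i\<in>I. tent (w i) z) = (\<Sum>i\<in>I-T. w i) + z * (real (card T) - (\<Sum>i\<in>I. w i))"
    using sum_tent_split[OF fin T] by simp
qed

lemma tropical_series_sum_tent:
  assumes fin: "finite I" and w: "\<And>i. i \<in> I \<Longrightarrow> w i \<in> {0..1}"
    and N: "(\<Sum>i\<in>I. w i) = real_of_int N"
  shows "tropical_series 0 1 (\<lambda>z. \<Sum>i\<in>I. tent (w i) z)"
proof -
  have "\<exists>a::int\<Rightarrow>real. \<forall>z\<in>{0..1}. bdd_below (range (\<lambda>v. a v + z * real_of_int v)) \<and>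
          (\<Sum>i\<in>I. tent (w i) z) = (INF v. a v + z * real_of_int v)"
  proof (rule tropical_series_of_lines[where S="Pow I" and c="\<lambda>T. \<Sum>i\<in>I-T. w i"
        and k="\<lambda>T. int (card T) - N"])
    show "(\<Sum>i\<in>I. tent (w i) z) \<le> (\<Sum>i\<in>I-T. w i) + z * real_of_int (int (card T) - N)"
      if "T \<in> Pow I" for z T
      using sum_tent_le_line[OF fin, of T w z] that N by simp
    show "\<exists>T\<in>Pow I. (\<Sum>i\<in>I. tent (w i) z) = (\<Sum>i\<in>I-T. w i) + z * real_of_int (int (card T) - N)"
      for z
    proof -
      obtain T where "T \<subseteq> I"
        "(\<Sum>i\<in>I. tent (w i) z) = (\<Sum>i\<in>I-T. w i) + z * (real (card T) - (\<Sum>i\<in>I. w i))"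
        using sum_tent_eq_line[OF fin] .
      with N show ?thesis by (intro bexI[of _ T]) auto
    qed
  qed (use fin in simp)
  moreover have "\<forall>z\<in>{0..1}. (\<Sum>i\<in>I. tent (w i) z) \<ge> 0"
    using w by (auto intro!: sum_nonneg tent_nonneg)
  moreover have "(\<Sum>i\<in>I. tent (w i) 0) = 0" "(\<Sum>i\<in>I. tent (w i) 1) = 0"
    using w by (auto simp: tent_at_0 tent_at_1 intro!: sum.neutral)
  ultimately show ?thesis unfolding tropical_series_def by blast
qed

text \<open>Slopes of a tropical series are integers, so the kink positions of a sum of tents must add
  up to an integer; the closing kink is the least extra kink that achieves this.\<close>
definition closing_kink :: "real set \<Rightarrow> real" where
  "closing_kink P = frac (- (\<Sum>p\<in>P. p))"

definition tent_sum :: "real set \<Rightarrow> real \<Rightarrow> real" where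
  "tent_sum P z = (\<Sum>p\<in>P. tent p z) + tent (closing_kink P) z"

lemma closing_kink_range: "closing_kink P \<in> {0..<1}"
  by (simp add: closing_kink_def frac_lt_1)

lemma sum_add_closing_kink: "(\<Sum>p\<in>P. p) + closing_kink P = real_of_int (- \<lfloor>- (\<Sum>p\<in>P. p)\<rfloor>)"
  by (simp add: closing_kink_def frac_def)

lemma closing_kink_insert:
  assumes "finite P" "b \<notin> P"
  shows "closing_kink (insert b P) = frac (closing_kink P - b)"
proof -
  have "frac (closing_kink P - b) = frac (- (\<Sum>p\<in>P. p) + - b)"
    unfolding closing_kink_def diff_conv_add_uminus by (rule frac_add_simps(1))
  also have "- (\<Sum>p\<in>P. p) + - b = - (\<Sum>p\<in>insert b P. p)"
    using assms by simp
  finally show ?thesis by (simp add: closing_kink_def)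
qed

lemma tropical_series_tent_sum:
  assumes fin: "finite P" and P: "P \<subseteq> {0<..<1}"
  shows "tropical_series 0 1 (tent_sum P)"
proof -
  txt \<open>Indexing by option keeps the closing kink apart even when it lies in P.\<close>
  define w where "w i = (case i of None \<Rightarrow> closing_kink P | Some p \<Rightarrow> p)" for i
  have sum_w: "(\<Sum>i\<in>insert None (Some ` P). f (w i)) = (\<Sum>p\<in>P. f p) + f (closing_kink P)"
    for f :: "real \<Rightarrow> real"
    using fin by (simp add: sum.reindex w_def)
  have "tropical_series 0 1 (\<lambda>z. \<Sum>i\<in>insert None (Some ` P). tent (w i) z)"
  proof (rule tropical_series_sum_tent)
    show "w i \<in> {0..1}" if "i \<in> insert None (Some ` P)" for i
      using that P closing_kink_range[of P] by (auto simp: w_def)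
    show "(\<Sum>i\<in>insert None (Some ` P). w i) = real_of_int (- \<lfloor>- (\<Sum>p\<in>P. p)\<rfloor>)"
      using sum_w[of "\<lambda>x. x"] sum_add_closing_kink[of P] by simp
  qed (use fin in simp)
  moreover have "tent_sum P = (\<lambda>z. \<Sum>i\<in>insert None (Some ` P). tent (w i) z)"
  proof
    show "tent_sum P z = (\<Sum>i\<in>insert None (Some ` P). tent (w i) z)" for z
      using sum_w[of "\<lambda>x. tent x z"] by (simp add: tent_sum_def)
  qed
  ultimately show ?thesis by simp
qed

lemma tent_sum_not_differentiable:
  assumes fin: "finite P" and P: "P \<subseteq> {0<..<1}" and p: "p \<in> P"
  shows "\<not> tent_sum P differentiable (at p)"
proof
  assume diff: "tent_sum P differentiable (at p)"
  define k :: real where "k = (if closing_kink P = p then 2 else 1)"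
  define rest where
    "rest z = (\<Sum>b\<in>P-{p}. tent b z) + (if closing_kink P = p then 0 else tent (closing_kink P) z)" for z
  have "rest differentiable (at p)"
    unfolding rest_def using P fin closing_kink_range[of P]
    by (cases "closing_kink P = p")
      (auto intro!: differentiable_add differentiable_sum tent_differentiable)
  then have "(\<lambda>z. (tent_sum P z - rest z) / k) differentiable (at p)"
    using diff by (intro differentiable_divide differentiable_diff) (auto simp: k_def)
  moreover have "tent p = (\<lambda>z. (tent_sum P z - rest z) / k)"
    using fin p by (auto simp: tent_sum_def rest_def k_def sum.remove)
  ultimately have "tent p differentiable (at p)" by simp
  then show False using tent_not_differentiable by blast
qed

section \<open>Structure of a tropical series\<close>

locale tropical_repr =
  fixes F :: "real \<Rightarrow> real" and a :: "int \<Rightarrow> real"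
  assumes repr: "\<And>z. z \<in> {0..1} \<Longrightarrow>
      bdd_below (range (\<lambda>v. a v + z * of_int v)) \<and> F z = (INF v. a v + z * of_int v)"
    and F_at_0: "F 0 = 0" and F_at_1: "F 1 = 0" and F_nonneg: "\<And>z. z \<in> {0..1} \<Longrightarrow> F z \<ge> 0"
begin

lemma le_line: "z \<in> {0..1} \<Longrightarrow> F z \<le> a v + z * of_int v"
  using repr[of z] by (auto intro: cINF_lower)

lemma ge_lines: "z \<in> {0..1} \<Longrightarrow> (\<And>v. c \<le> a v + z * of_int v) \<Longrightarrow> c \<le> F z"
  using repr[of z] by (auto intro: cINF_greatest)

lemma coeff_nonneg: "a v \<ge> 0"
  using le_line[of 0 v] F_at_0 by simp

lemma coeff_add_slope_nonneg: "a v + of_int v \<ge> 0"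
  using le_line[of 1 v] F_at_1 by simp

lemma finite_lines_below:
  assumes z: "z \<in> {0<..<1}"
  shows "finite {v. a v + z * of_int v < c}"
proof -
  define N where "N = \<lceil>\<bar>c\<bar> / z + \<bar>c\<bar> / (1 - z)\<rceil>"
  have "{v. a v + z * of_int v < c} \<subseteq> {-N..N}"
  proof
    fix v assume "v \<in> {v. a v + z * of_int v < c}"
    then have v: "a v + z * of_int v < c" by simp
    have "z * of_int v < c" using v coeff_nonneg[of v] by linarith
    then have "of_int v < \<bar>c\<bar> / z" using z by (simp add: pos_less_divide_eq mult.commute)
    also have "\<dots> \<le> of_int N"
      unfolding N_def using z by (intro order_trans[OF _ le_of_int_ceiling]) simp
    finally have up: "v \<le> N" by simp
    have "(1 - z) * (- of_int v) < c" using v coeff_add_slope_nonneg[of v] by (simp add: algebra_simps)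
    then have "- of_int v < \<bar>c\<bar> / (1 - z)" using z by (simp add: pos_less_divide_eq mult.commute)
    also have "\<dots> \<le> of_int N"
      unfolding N_def using z by (intro order_trans[OF _ le_of_int_ceiling]) simp
    finally show "v \<in> {-N..N}" using up by simp
  qed
  then show ?thesis by (rule finite_subset) simp
qed

lemma line_attains:
  assumes z: "z \<in> {0<..<1}"
  obtains v where "a v + z * of_int v = F z"
proof -
  have z01: "z \<in> {0..1}" using z by auto
  define f where "f v = a v + z * of_int v" for v
  define V where "V = {v. f v < F z + 1}"
  have fin: "finite V" unfolding V_def f_def by (rule finite_lines_below[OF z])
  obtain v1 where "f v1 < F z + 1"
    using repr[OF z01] cINF_less_iff[of UNIV f "F z + 1"] unfolding f_def by auto
  then have "Min (f ` V) \<in> f ` V" using fin unfolding V_def by (intro Min_in) auto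
  then obtain v0 where v0: "v0 \<in> V" "f v0 = Min (f ` V)" by auto
  have "F z \<ge> f v0"
  proof (rule ge_lines[OF z01, folded f_def])
    show "f v0 \<le> f v" for v
      using v0 fin by (cases "v \<in> V") (auto simp: V_def)
  qed
  with le_line[OF z01, of v0] show ?thesis by (intro that[of v0]) (simp add: f_def)
qed

lemma concave: "concave_on {0..1} F"
  unfolding concave_on_iff
proof (intro conjI ballI allI impI)
  fix x y u w :: real
  assume xy: "x \<in> {0..1}" "y \<in> {0..1}" and uw: "u \<ge> 0" "w \<ge> 0" "u + w = 1"
  have "u * x \<le> u" "w * y \<le> w" using xy uw by (auto intro: mult_left_le)
  with xy uw have "u * x + w * y \<in> {0..1}" by auto
  moreover have "u * F x + w * F y \<le> a v + (u * x + w * y) * of_int v" for v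
  proof -
    have "u * F x + w * F y \<le> u * (a v + x * of_int v) + w * (a v + y * of_int v)"
      using uw le_line[OF xy(1)] le_line[OF xy(2)] by (intro add_mono mult_left_mono) auto
    also have "\<dots> = a v + (u * x + w * y) * of_int v"
      using uw by (simp add: algebra_simps flip: distrib_right)
    finally show ?thesis .
  qed
  ultimately show "u * F x + w * F y \<le> F (u *\<^sub>R x + w *\<^sub>R y)"
    by (auto intro: ge_lines)
qed (simp add: convex_real_interval)

lemma upper_semicontinuous:
  assumes z: "z \<in> {0..1}" and e: "e > 0"
  obtains d where "d > 0" "\<And>x. x \<in> {0..1} \<Longrightarrow> \<bar>x - z\<bar> < d \<Longrightarrow> F x < F z + e"
proof -
  obtain v where v: "a v + z * of_int v < F z + e / 2"
    using repr[OF z] e cINF_less_iff[of UNIV "\<lambda>v. a v + z * of_int v" "F z + e / 2"] by auto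
  define d where "d = e / (2 * (\<bar>real_of_int v\<bar> + 1))"
  show ?thesis
  proof (rule that)
    show "d > 0" using e by (simp add: d_def add_nonneg_pos)
    fix x assume x: "x \<in> {0..1}" "\<bar>x - z\<bar> < d"
    have "(x - z) * of_int v \<le> \<bar>x - z\<bar> * \<bar>real_of_int v\<bar>"
      by (metis abs_ge_self abs_mult)
    also have "\<dots> \<le> d * \<bar>real_of_int v\<bar>" using x by (intro mult_right_mono) auto
    also have "\<dots> < e / 2" using e by (simp add: d_def field_simps)
    finally have "a v + x * of_int v < F z + e" using v by (simp add: algebra_simps)
    with le_line[OF x(1), of v] show "F x < F z + e" by linarith
  qed
qed

lemma continuous: "continuous_on {0..1} F"
proof -
  have interior: "continuous_on {0<..<1} F"
  proof -
    have "convex_on {0<..<1} (\<lambda>x. - F x)"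
      using convex_on_subset[OF concave[unfolded concave_on_def], of "{0<..<1}"]
      by (simp add: convex_real_interval subset_eq)
    then have "continuous_on {0<..<1} (\<lambda>x. - (- F x))"
      by (intro continuous_on_minus convex_on_continuous) auto
    then show ?thesis by simp
  qed
  have "continuous (at z within {0..1}) F" if z: "z \<in> {0..1}" for z
  proof (cases "z \<in> {0<..<1}")
    case True
    then show ?thesis
      using continuous_on_interior[OF interior] by (simp add: continuous_at_imp_continuous_within)
  next
    case False
    then have Fz: "F z = 0" using z F_at_0 F_at_1 by force
    show ?thesis unfolding continuous_within_eps_delta
    proof (intro allI impI)
      fix e :: real assume "e > 0"
      with upper_semicontinuous[OF z] obtain d where
        "d > 0" "\<And>x. x \<in> {0..1} \<Longrightarrow> \<bar>x - z\<bar> < d \<Longrightarrow> F x < F z + e" by blast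
      then show "\<exists>d>0. \<forall>x\<in>{0..1}. dist x z < d \<longrightarrow> dist (F x) (F z) < e"
        using F_nonneg Fz by (auto simp: dist_real_def)
    qed
  qed
  then show ?thesis by (simp add: continuous_on_eq_continuous_within)
qed

lemma line_stays_high:
  assumes z: "z \<in> {0<..<1}" and x: "x \<in> {0..1}"
    and c: "a v + z * of_int v \<ge> c" and dx: "\<bar>x - z\<bar> * c \<le> min z (1 - z) / 2"
  shows "a v + x * of_int v \<ge> c - 1/2"
proof (cases "x \<ge> z")
  case True
  have "(1 - z) * (a v + x * of_int v) = (1 - x) * (a v + z * of_int v) + (x - z) * (a v + of_int v)"
    by (simp add: algebra_simps)
  also have "\<dots> \<ge> (1 - x) * c"
    using True x c coeff_add_slope_nonneg[of v] by (simp add: add_increasing2 mult_left_mono)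
  finally have "(1 - z) * (a v + x * of_int v) \<ge> (1 - x) * c" .
  moreover have "(1 - x) * c = (1 - z) * (c - 1/2) + ((1 - z) / 2 - (x - z) * c)"
    by (simp add: algebra_simps)
  moreover have "(x - z) * c \<le> (1 - z) / 2" using dx True by auto
  ultimately have "(1 - z) * (a v + x * of_int v) \<ge> (1 - z) * (c - 1/2)" by linarith
  then show ?thesis using z by (simp add: mult_le_cancel_left_pos)
next
  case False
  have "z * (a v + x * of_int v) = x * (a v + z * of_int v) + (z - x) * a v"
    by (simp add: algebra_simps)
  also have "\<dots> \<ge> x * c"
    using False x c coeff_nonneg[of v] by (simp add: add_increasing2 mult_left_mono)
  finally have "z * (a v + x * of_int v) \<ge> x * c" .
  moreover have "x * c = z * (c - 1/2) + (z / 2 - (z - x) * c)"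
    by (simp add: algebra_simps)
  moreover have "(z - x) * c \<le> z / 2" using dx False by auto
  ultimately have "z * (a v + x * of_int v) \<ge> z * (c - 1/2)" by linarith
  then show ?thesis using z by (simp add: mult_le_cancel_left_pos)
qed

lemma bounded_slopes_near_min:
  assumes z: "z \<in> {0<..<1}"
  obtains B where "B \<ge> 0" "\<And>v. a v + z * of_int v < F z + 1 \<Longrightarrow> \<bar>real_of_int v\<bar> \<le> B"
proof
  define V where "V = {v. a v + z * of_int v < F z + 1}"
  have "finite V" unfolding V_def by (rule finite_lines_below[OF z])
  then show "\<bar>real_of_int v\<bar> \<le> (\<Sum>v\<in>V. \<bar>real_of_int v\<bar>)" if "a v + z * of_int v < F z + 1" for v
    using that by (intro member_le_sum) (auto simp: V_def)
qed (simp add: sum_nonneg)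

lemma gap_of_inactive_lines:
  assumes z: "z \<in> {0<..<1}"
  obtains \<gamma> where "0 < \<gamma>" "\<gamma> \<le> 1" "\<And>v. a v + z * of_int v \<noteq> F z \<Longrightarrow> F z + \<gamma> \<le> a v + z * of_int v"
proof
  have z01: "z \<in> {0..1}" using z by auto
  define gap where "gap v = a v + z * of_int v - F z" for v
  define V where "V = {v. gap v < 1 \<and> gap v \<noteq> 0}"
  have "finite V"
    using finite_lines_below[OF z, of "F z + 1"] by (rule rev_finite_subset) (auto simp: V_def gap_def)
  define \<gamma> where "\<gamma> = Min (insert 1 (gap ` V))"
  have gap_nonneg: "gap v \<ge> 0" for v using le_line[OF z01, of v] by (simp add: gap_def)
  have "\<gamma> \<in> insert 1 (gap ` V)" unfolding \<gamma>_def using \<open>finite V\<close> by (intro Min_in) auto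
  then show "0 < \<gamma>" using gap_nonneg by (auto simp: V_def less_le)
  show "\<gamma> \<le> 1" unfolding \<gamma>_def using \<open>finite V\<close> by (intro Min_le) auto
  show "F z + \<gamma> \<le> a v + z * of_int v" if "a v + z * of_int v \<noteq> F z" for v
  proof (cases "v \<in> V")
    case True
    then have "\<gamma> \<le> gap v" unfolding \<gamma>_def using \<open>finite V\<close> by (intro Min_le) auto
    then show ?thesis by (simp add: gap_def)
  next
    case False
    then have "1 \<le> gap v" using that by (auto simp: V_def gap_def)
    moreover have "\<gamma> \<le> 1" unfolding \<gamma>_def using \<open>finite V\<close> by (intro Min_le) auto
    ultimately show ?thesis by (simp add: gap_def)
  qed
qed

text \<open>Near an interior point z every line that is active at z (touches F there) lies below
  every line that is not: inactive lines keep a positive gap at z, and the slopes of the lines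
  that come close to F z are bounded.\<close>
lemma active_lines_locally_below:
  assumes z: "z \<in> {0<..<1}"
  obtains \<delta> where "\<delta> > 0" "\<And>x. \<bar>x - z\<bar> < \<delta> \<Longrightarrow> x \<in> {0<..<1}"
    "\<And>x v w. \<bar>x - z\<bar> < \<delta> \<Longrightarrow> a w + z * of_int w = F z \<Longrightarrow> a v + z * of_int v \<noteq> F z \<Longrightarrow>
       a w + x * of_int w \<le> a v + x * of_int v"
proof -
  obtain B where B: "B \<ge> 0" "\<And>v. a v + z * of_int v < F z + 1 \<Longrightarrow> \<bar>real_of_int v\<bar> \<le> B"
    using bounded_slopes_near_min[OF z] by blast
  obtain \<gamma> where \<gamma>: "0 < \<gamma>" "\<gamma> \<le> 1"
    "\<And>v. a v + z * of_int v \<noteq> F z \<Longrightarrow> F z + \<gamma> \<le> a v + z * of_int v"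
    using gap_of_inactive_lines[OF z] by blast
  define c where "c = F z + 1"
  have c1: "c \<ge> 1" using F_nonneg[of z] z unfolding c_def by simp
  define \<delta> where "\<delta> = min (min z (1 - z) / (2 * c)) (\<gamma> / (2 * (B + 1)))"
  show ?thesis
  proof (rule that[of \<delta>])
    show "\<delta> > 0" unfolding \<delta>_def using z c1 \<gamma> B by auto
    fix x assume dx: "\<bar>x - z\<bar> < \<delta>"
    have near: "\<bar>x - z\<bar> * c \<le> min z (1 - z) / 2"
      using dx c1 by (simp add: \<delta>_def field_simps)
    moreover have "\<bar>x - z\<bar> \<le> \<bar>x - z\<bar> * c" using c1 by (simp add: mult_le_cancel_left1)
    ultimately show x: "x \<in> {0<..<1}" using z by (auto simp: abs_le_iff)
    have "(B + 1) * \<bar>x - z\<bar> < \<gamma> / 2"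
      using dx B(1) by (simp add: \<delta>_def field_simps)
    moreover have "(B + 1) * \<bar>x - z\<bar> = B * \<bar>x - z\<bar> + \<bar>x - z\<bar>"
      by (simp add: distrib_right)
    ultimately have small: "B * \<bar>x - z\<bar> < \<gamma> / 2" by linarith
    have slope: "\<bar>of_int v * (x - z)\<bar> \<le> B * \<bar>x - z\<bar>" if "a v + z * of_int v < F z + 1" for v
      using B(2)[OF that] by (simp add: abs_mult mult_right_mono)
    have line_x: "a v + x * of_int v = (a v + z * of_int v) + of_int v * (x - z)" for v
      by (simp add: algebra_simps)
    fix v w assume w: "a w + z * of_int w = F z" and v: "a v + z * of_int v \<noteq> F z"
    have "a w + x * of_int w < F z + \<gamma> / 2"
      using line_x[of w] w slope[of w] small by (simp add: abs_le_iff)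
    also have "F z + \<gamma> / 2 \<le> a v + x * of_int v"
    proof (cases "a v + z * of_int v < c")
      case True
      then show ?thesis
        using line_x[of v] \<gamma>(3)[OF v] slope[of v] small by (simp add: c_def abs_le_iff)
    next
      case False
      then have "a v + x * of_int v \<ge> c - 1/2"
        using x near by (intro line_stays_high[OF z]) auto
      then show ?thesis using \<gamma>(2) by (simp add: c_def)
    qed
    finally show "a w + x * of_int w \<le> a v + x * of_int v" by simp
  qed
qed

lemma kink_has_two_active_slopes:
  assumes z: "z \<in> {0<..<1}" and nd: "\<not> F differentiable (at z)"
  obtains l r where "a l + z * of_int l = F z" "a r + z * of_int r = F z" "r < l"
proof -
  obtain v0 where v0: "a v0 + z * of_int v0 = F z" using line_attains[OF z] .
  show ?thesis
  proof (cases "\<exists>v. v \<noteq> v0 \<and> a v + z * of_int v = F z")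
    case True
    then obtain v where "v \<noteq> v0" "a v + z * of_int v = F z" by blast
    with v0 show ?thesis
      by (cases "v < v0") (auto intro: that[of v0 v] that[of v v0])
  next
    case False
    obtain \<delta> where \<delta>: "\<delta> > 0" and inside: "\<And>x. \<bar>x - z\<bar> < \<delta> \<Longrightarrow> x \<in> {0<..<1}"
      and below: "\<And>x v w. \<bar>x - z\<bar> < \<delta> \<Longrightarrow> a w + z * of_int w = F z \<Longrightarrow>
          a v + z * of_int v \<noteq> F z \<Longrightarrow> a w + x * of_int w \<le> a v + x * of_int v"
      using active_lines_locally_below[OF z] by blast
    have eq: "a v0 + x * of_int v0 = F x" if "x \<in> ball z \<delta>" for x
    proof -
      have x: "\<bar>x - z\<bar> < \<delta>" "x \<in> {0..1}"
        using that inside[of x] by (auto simp: dist_real_def abs_minus_commute)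
      have "a v0 + x * of_int v0 \<le> a v + x * of_int v" for v
        using below[OF x(1) v0, of v] False by (cases "v = v0") auto
      then show ?thesis by (intro antisym ge_lines[OF x(2)] le_line[OF x(2)])
    qed
    have "((\<lambda>x. a v0 + x * of_int v0) has_real_derivative of_int v0) (at z)"
      by (auto intro!: derivative_eq_intros)
    then have "(F has_real_derivative of_int v0) (at z)"
      by (rule has_field_derivative_transform_within_open[OF _ open_ball]) (use \<delta> eq in auto)
    with nd show ?thesis by (auto simp: real_differentiable_def)
  qed
qed

end

section \<open>Minimality of the tent sum\<close>

lemma continuous_attains_leftmost_inf:
  fixes D :: "real \<Rightarrow> real"
  assumes ab: "a \<le> b" and cont: "continuous_on {a..b} D"
  obtains t where "t \<in> {a..b}" "\<And>y. y \<in> {a..b} \<Longrightarrow> D t \<le> D y" "\<And>y. y \<in> {a..<t} \<Longrightarrow> D t < D y"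
proof -
  obtain t0 where t0: "t0 \<in> {a..b}" "\<And>y. y \<in> {a..b} \<Longrightarrow> D t0 \<le> D y"
    using continuous_attains_inf[OF compact_Icc _ cont] ab by auto
  define K where "K = {a..b} \<inter> D -` {D t0}"
  have bddK: "bdd_below K" unfolding K_def by (rule bdd_belowI[of _ a]) auto
  have "Inf K \<in> K"
    using t0 cont by (intro closed_contains_Inf bddK) (auto simp: K_def intro!: continuous_closed_preimage)
  then have t: "Inf K \<in> {a..b}" "D (Inf K) = D t0" unfolding K_def by auto
  show ?thesis
  proof (rule that[OF t(1)])
    show "D (Inf K) \<le> D y" if "y \<in> {a..b}" for y using t0(2)[OF that] t(2) by simp
    show "D (Inf K) < D y" if y: "y \<in> {a..<Inf K}" for y
    proof (rule ccontr)
      assume "\<not> D (Inf K) < D y"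
      with y t have "y \<in> K" using t0(2)[of y] by (auto simp: K_def)
      then have "Inf K \<le> y" using bddK by (rule cInf_lower)
      with y show False by simp
    qed
  qed
qed

text \<open>Minimality argument: at a leftmost minimum point of the gap between f and its chord,
  a local upper line cannot exist unless the gap is nonnegative.\<close>
lemma chord_below_of_local_upper_lines:
  fixes f :: "real \<Rightarrow> real"
  assumes ab: "a < b" and cont: "continuous_on {a..b} f"
    and local: "\<And>z. z \<in> {a<..<b} \<Longrightarrow>
      \<exists>m \<delta>. \<delta> > 0 \<and> (\<forall>x\<in>{a..b}. \<bar>x - z\<bar> < \<delta> \<longrightarrow> f x \<le> f z + m * (x - z))"
    and t: "t \<in> {a..b}"
  shows "f t * (b - a) \<ge> f a * (b - t) + f b * (t - a)"
proof (rule ccontr)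
  define D where "D x = f x * (b - a) - (f a * (b - x) + f b * (x - a))" for x
  assume "\<not> ?thesis"
  then have "D t < 0" unfolding D_def by simp
  have "continuous_on {a..b} D" unfolding D_def by (intro continuous_intros cont)
  then obtain t1 where t1: "t1 \<in> {a..b}" and min: "\<And>y. y \<in> {a..b} \<Longrightarrow> D t1 \<le> D y"
    and leftmost: "\<And>y. y \<in> {a..<t1} \<Longrightarrow> D t1 < D y"
    using continuous_attains_leftmost_inf[of a b D] ab by auto
  have "D a = 0" "D b = 0" unfolding D_def by (simp_all add: algebra_simps)
  moreover have "D t1 < 0" using min[OF t] \<open>D t < 0\<close> by simp
  ultimately have t1_int: "t1 \<in> {a<..<b}" using t1 by (cases "t1 = a \<or> t1 = b") auto
  obtain m \<delta> where \<delta>: "\<delta> > 0"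
    and up: "\<And>x. x \<in> {a..b} \<Longrightarrow> \<bar>x - t1\<bar> < \<delta> \<Longrightarrow> f x \<le> f t1 + m * (x - t1)"
    using local[OF t1_int] by blast
  define \<mu> where "\<mu> = (b - a) * m + f a - f b"
  have D_up: "D x - D t1 \<le> \<mu> * (x - t1)" if "x \<in> {a..b}" "\<bar>x - t1\<bar> < \<delta>" for x
  proof -
    have "D x - D t1 = (b - a) * (f x - f t1) + (f a - f b) * (x - t1)"
      unfolding D_def by (simp add: algebra_simps)
    also have "(b - a) * (f x - f t1) \<le> (b - a) * (m * (x - t1))"
      using up[OF that] ab by (intro mult_left_mono) auto
    finally show ?thesis unfolding \<mu>_def by (simp add: algebra_simps)
  qed
  define h where "h = min (\<delta> / 2) (min ((b - t1) / 2) ((t1 - a) / 2))"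
  have h_le: "h \<le> \<delta> / 2" "h \<le> (b - t1) / 2" "h \<le> (t1 - a) / 2"
    unfolding h_def by (rule min.cobounded1, rule min.coboundedI2[OF min.cobounded1],
      rule min.coboundedI2[OF min.cobounded2])
  have "h > 0" using \<delta> t1_int by (simp add: h_def)
  with h_le \<delta> t1_int have h: "t1 + h \<in> {a..b}" "t1 - h \<in> {a..<t1}" "\<bar>h\<bar> < \<delta>" by auto
  have "0 \<le> \<mu> * h" using D_up[of "t1 + h"] min[of "t1 + h"] h by simp
  then have "\<mu> \<ge> 0" using \<open>h > 0\<close> by (simp add: zero_le_mult_iff)
  moreover have "D (t1 - h) - D t1 \<le> - (\<mu> * h)" using D_up[of "t1 - h"] h by simp
  ultimately have "D (t1 - h) \<le> D t1" using \<open>h > 0\<close> by (smt (verit) mult_nonneg_nonneg)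
  with leftmost[OF h(2)] show False by simp
qed

lemma local_upper_line_global:
  fixes g :: "real \<Rightarrow> real"
  assumes chord: "\<And>\<alpha> \<beta> t. 0 \<le> \<alpha> \<Longrightarrow> \<alpha> < \<beta> \<Longrightarrow> \<beta> \<le> 1 \<Longrightarrow> t \<in> {\<alpha>..\<beta>} \<Longrightarrow>
      g t * (\<beta> - \<alpha>) \<ge> g \<alpha> * (\<beta> - t) + g \<beta> * (t - \<alpha>)"
    and \<delta>: "\<delta> > 0" and local: "\<And>x. x \<in> {0..1} \<Longrightarrow> \<bar>x - q\<bar> < \<delta> \<Longrightarrow> g x \<le> g q + m * (x - q)"
    and q: "q \<in> {0..1}" and x: "x \<in> {0..1}"
  shows "g x \<le> g q + m * (x - q)"
proof (cases x q rule: linorder_cases)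
  case less
  define t where "t = max x (q - \<delta> / 2)"
  have t: "t \<in> {x..q}" "t \<noteq> q" "t \<in> {0..1}" "\<bar>t - q\<bar> < \<delta>"
    using less \<delta> q x by (auto simp: t_def)
  have "g t * (q - x) \<ge> g x * (q - t) + g q * (t - x)" using chord[of x q t] less q x t by auto
  moreover have "g t * (q - x) \<le> (g q + m * (t - q)) * (q - x)"
    using local[OF t(3,4)] less by (intro mult_right_mono) auto
  ultimately have "(q - t) * g x \<le> (q - t) * (g q + m * (x - q))" by (simp add: algebra_simps)
  then show ?thesis using t(1,2) by simp
next
  case greater
  define t where "t = min x (q + \<delta> / 2)"
  have t: "t \<in> {q..x}" "t \<noteq> q" "t \<in> {0..1}" "\<bar>t - q\<bar> < \<delta>"
    using greater \<delta> q x by (auto simp: t_def)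
  have "g t * (x - q) \<ge> g q * (x - t) + g x * (t - q)" using chord[of q x t] greater q x t by auto
  moreover have "g t * (x - q) \<le> (g q + m * (t - q)) * (x - q)"
    using local[OF t(3,4)] greater by (intro mult_right_mono) auto
  ultimately have "(t - q) * g x \<le> (t - q) * (g q + m * (x - q))" by (simp add: algebra_simps)
  then show ?thesis using t(1,2) by simp
qed simp

lemma sum_tent_locally_linear:
  assumes fin: "finite Q" and Q: "Q \<subseteq> {0..1}" and z: "z \<notin> Q"
  obtains \<delta> and k :: int where "\<delta> > 0"
    "\<And>x. \<bar>x - z\<bar> < \<delta> \<Longrightarrow>
       (\<Sum>p\<in>Q. tent p x) = (\<Sum>p\<in>Q. tent p z) + (of_int k - (\<Sum>p\<in>Q. p)) * (x - z)"
proof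
  define \<delta> where "\<delta> = Min (insert 1 ((\<lambda>p. \<bar>p - z\<bar>) ` Q))"
  have "\<delta> \<in> insert 1 ((\<lambda>p. \<bar>p - z\<bar>) ` Q)" unfolding \<delta>_def using fin by (intro Min_in) auto
  then show "\<delta> > 0" using z by auto
  have \<delta>_le: "\<delta> \<le> \<bar>p - z\<bar>" if "p \<in> Q" for p unfolding \<delta>_def using fin that by (intro Min_le) auto
  define \<sigma> where "\<sigma> p = (if z < p then 1 else 0) - p" for p :: real
  fix x assume x: "\<bar>x - z\<bar> < \<delta>"
  have "tent p x = tent p z + \<sigma> p * (x - z)" if p: "p \<in> Q" for p
  proof (cases "z < p")
    case True
    then have "x \<le> p" using \<delta>_le[OF p] x by auto
    then show ?thesis using True p Q by (auto simp: tent_left \<sigma>_def algebra_simps)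
  next
    case False
    then have "p < z" using p z by (cases "p = z") auto
    then have "p \<le> x" using \<delta>_le[OF p] x by auto
    then show ?thesis using \<open>p < z\<close> by (simp add: tent_right \<sigma>_def algebra_simps)
  qed
  then have "(\<Sum>p\<in>Q. tent p x) = (\<Sum>p\<in>Q. tent p z) + (\<Sum>p\<in>Q. \<sigma> p) * (x - z)"
    by (simp add: sum.distrib sum_distrib_right)
  also have "(\<Sum>p\<in>Q. \<sigma> p) = of_int (int (card {p\<in>Q. z < p})) - (\<Sum>p\<in>Q. p)"
    using fin by (simp add: \<sigma>_def sum_subtractf sum.If_cases Int_def)
  finally show "(\<Sum>p\<in>Q. tent p x) = (\<Sum>p\<in>Q. tent p z) +
      (of_int (int (card {p\<in>Q. z < p})) - (\<Sum>p\<in>Q. p)) * (x - z)" .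
qed

lemma closing_kink_support_bound:
  fixes m q :: real
  assumes "m + q \<in> \<int>" "0 \<le> q" "q < 1"
  shows "q * (1 - q) \<le> m * q \<or> q * (1 - q) \<le> - m * (1 - q)"
proof -
  obtain j :: int where j: "m = of_int j - q" using assms(1) by (metis Ints_cases add_diff_cancel_right')
  show ?thesis
  proof (cases "j \<ge> 1")
    case True
    then have "1 - q \<le> m" using j by simp
    then have "(1 - q) * q \<le> m * q" using assms(2) by (rule mult_right_mono)
    then show ?thesis by (simp add: algebra_simps)
  next
    case False
    then have "q \<le> - m" using j by simp
    then have "q * (1 - q) \<le> - m * (1 - q)" using assms(3) by (intro mult_right_mono) auto
    then show ?thesis by simp
  qed
qed

context tropical_repr
begin

definition residual :: "real set \<Rightarrow> real \<Rightarrow> real" where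
  "residual P z = F z - (\<Sum>p\<in>P. tent p z)"

lemma residual_continuous: "finite P \<Longrightarrow> continuous_on {0..1} (residual P)"
  unfolding residual_def tent_def by (intro continuous_intros continuous)

text \<open>At a kink of F the slope drops by at least 1, so subtracting the tent there keeps
  an upper line through the point.\<close>
lemma upper_line_minus_tent_at_kink:
  assumes z: "z \<in> {0<..<1}" and nd: "\<not> F differentiable (at z)"
  obtains r :: int where
    "\<And>x. x \<in> {0..1} \<Longrightarrow> F x - tent z x \<le> F z - tent z z + (of_int r + z) * (x - z)"
proof -
  obtain l r where l: "a l + z * of_int l = F z" and r: "a r + z * of_int r = F z" and "r < l"
    using kink_has_two_active_slopes[OF z nd] .
  have upper: "F x \<le> F z + of_int v * (x - z)" if "a v + z * of_int v = F z" "x \<in> {0..1}" for v x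
    using le_line[OF that(2), of v] that(1) by (simp add: algebra_simps)
  show ?thesis
  proof (rule that[of r])
    fix x :: real assume x: "x \<in> {0..1}"
    show "F x - tent z x \<le> F z - tent z z + (of_int r + z) * (x - z)"
    proof (cases "z \<le> x")
      case True
      then have "tent z x = tent z z - z * (x - z)" by (simp add: tent_right algebra_simps)
      then show ?thesis using upper[OF r x] by (simp add: algebra_simps)
    next
      case False
      have "of_int l * (x - z) \<le> (of_int r + 1) * (x - z)"
        using \<open>r < l\<close> False by (intro mult_right_mono_neg) auto
      moreover have "tent z x = tent z z + (1 - z) * (x - z)"
        using False z by (simp add: tent_left algebra_simps)
      ultimately show ?thesis using upper[OF l x] by (simp add: algebra_simps)
    qed
  qed
qed

lemma residual_local_upper_line:
  assumes fin: "finite P" and P: "P \<subseteq> {0<..<1}" and nd: "\<forall>p\<in>P. \<not> F differentiable (at p)"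
    and z: "z \<in> {0<..<1}"
  obtains \<delta> and k :: int where "\<delta> > 0"
    "\<And>x. x \<in> {0..1} \<Longrightarrow> \<bar>x - z\<bar> < \<delta> \<Longrightarrow>
       residual P x \<le> residual P z + (of_int k + (\<Sum>p\<in>P. p)) * (x - z)"
proof -
  have "finite (P - {z})" "P - {z} \<subseteq> {0..1}" "z \<notin> P - {z}" using fin P by auto
  then obtain \<delta> j where "\<delta> > 0" and lin: "\<And>x. \<bar>x - z\<bar> < \<delta> \<Longrightarrow>
      (\<Sum>p\<in>P-{z}. tent p x) = (\<Sum>p\<in>P-{z}. tent p z) + (of_int j - (\<Sum>p\<in>P-{z}. p)) * (x - z)"
    by (rule sum_tent_locally_linear) blast
  show ?thesis
  proof (cases "z \<in> P")
    case False
    obtain v where v: "a v + z * of_int v = F z" using line_attains[OF z] .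
    show ?thesis
    proof (rule that[OF \<open>\<delta> > 0\<close>, of "v - j"])
      fix x :: real assume x: "x \<in> {0..1}" "\<bar>x - z\<bar> < \<delta>"
      have "F x \<le> F z + of_int v * (x - z)"
        using le_line[OF x(1), of v] v by (simp add: algebra_simps)
      then show "residual P x \<le> residual P z + (of_int (v - j) + (\<Sum>p\<in>P. p)) * (x - z)"
        using lin[OF x(2)] False by (simp add: residual_def algebra_simps)
    qed
  next
    case True
    obtain r where r: "\<And>x. x \<in> {0..1} \<Longrightarrow>
        F x - tent z x \<le> F z - tent z z + (of_int r + z) * (x - z)"
      using upper_line_minus_tent_at_kink[OF z] nd True by blast
    have split: "(\<Sum>p\<in>P. f p) = f z + (\<Sum>p\<in>P-{z}. f p)" for f :: "real \<Rightarrow> real"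
      using fin True by (simp add: sum.remove)
    show ?thesis
    proof (rule that[OF \<open>\<delta> > 0\<close>, of "r - j"])
      fix x :: real assume x: "x \<in> {0..1}" "\<bar>x - z\<bar> < \<delta>"
      show "residual P x \<le> residual P z + (of_int (r - j) + (\<Sum>p\<in>P. p)) * (x - z)"
        using r[OF x(1)] lin[OF x(2)] unfolding residual_def split[of "\<lambda>p. p"] split[of "\<lambda>p. tent p _"]
        by (simp add: algebra_simps)
    qed
  qed
qed

lemma residual_chord:
  assumes fin: "finite P" and P: "P \<subseteq> {0<..<1}" and nd: "\<forall>p\<in>P. \<not> F differentiable (at p)"
    and ab: "0 \<le> \<alpha>" "\<alpha> < \<beta>" "\<beta> \<le> 1" and t: "t \<in> {\<alpha>..\<beta>}"
  shows "residual P t * (\<beta> - \<alpha>) \<ge> residual P \<alpha> * (\<beta> - t) + residual P \<beta> * (t - \<alpha>)"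
proof (rule chord_below_of_local_upper_lines[OF ab(2) _ _ t])
  show "continuous_on {\<alpha>..\<beta>} (residual P)"
    using residual_continuous[OF fin] by (rule continuous_on_subset) (use ab in auto)
  fix z assume "z \<in> {\<alpha><..<\<beta>}"
  then have "z \<in> {0<..<1}" using ab by auto
  with residual_local_upper_line[OF fin P nd] obtain \<delta> k where "\<delta> > 0" "\<And>x. x \<in> {0..1} \<Longrightarrow>
      \<bar>x - z\<bar> < \<delta> \<Longrightarrow> residual P x \<le> residual P z + (of_int k + (\<Sum>p\<in>P. p)) * (x - z)"
    by blast
  then show "\<exists>m \<delta>. \<delta> > 0 \<and> (\<forall>x\<in>{\<alpha>..\<beta>}. \<bar>x - z\<bar> < \<delta> \<longrightarrow> residual P x \<le> residual P z + m * (x - z))"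
    using ab by (intro exI[of _ "of_int k + (\<Sum>p\<in>P. p)"] exI[of _ \<delta>]) auto
qed

text \<open>The upper line of the residual at the closing kink q has slope congruent to -q
  modulo 1; since the residual vanishes at 0 and 1, this forces a value of at least
  q (1 - q) at q.\<close>
lemma residual_at_closing_kink:
  assumes fin: "finite P" and P: "P \<subseteq> {0<..<1}" and nd: "\<forall>p\<in>P. \<not> F differentiable (at p)"
  shows "closing_kink P * (1 - closing_kink P) \<le> residual P (closing_kink P)"
proof -
  define q where "q = closing_kink P"
  have q: "q \<in> {0..<1}" unfolding q_def by (rule closing_kink_range)
  have R0: "residual P 0 = 0" and R1: "residual P 1 = 0"
    using P F_at_0 F_at_1 by (auto simp: residual_def tent_at_0 tent_at_1 intro!: sum.neutral)
  show ?thesis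
  proof (cases "q = 0")
    case True
    then show ?thesis using R0 by (simp add: q_def)
  next
    case False
    with q have q_int: "q \<in> {0<..<1}" by auto
    obtain \<delta> k where "\<delta> > 0" and up: "\<And>x. x \<in> {0..1} \<Longrightarrow> \<bar>x - q\<bar> < \<delta> \<Longrightarrow>
        residual P x \<le> residual P q + (of_int k + (\<Sum>p\<in>P. p)) * (x - q)"
      using residual_local_upper_line[OF fin P nd q_int] by blast
    define m where "m = of_int k + (\<Sum>p\<in>P. p)"
    have global: "residual P x \<le> residual P q + m * (x - q)" if "x \<in> {0..1}" for x
      using q that
      by (intro local_upper_line_global[OF residual_chord[OF fin P nd] \<open>\<delta> > 0\<close> up[folded m_def]]) auto
    have "m + q \<in> \<int>"
      using sum_add_closing_kink[of P] unfolding m_def q_def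
      by (metis Ints_add Ints_of_int add.assoc)
    then have "q * (1 - q) \<le> m * q \<or> q * (1 - q) \<le> - m * (1 - q)"
      using q by (intro closing_kink_support_bound) auto
    then show ?thesis using global[of 0] global[of 1] R0 R1 by (auto simp: q_def algebra_simps)
  qed
qed

lemma tent_closing_kink_le_residual:
  assumes fin: "finite P" and P: "P \<subseteq> {0<..<1}" and nd: "\<forall>p\<in>P. \<not> F differentiable (at p)"
    and z: "z \<in> {0..1}"
  shows "tent (closing_kink P) z \<le> residual P z"
proof -
  define q where "q = closing_kink P"
  have q: "q \<in> {0..<1}" unfolding q_def by (rule closing_kink_range)
  have Rq: "q * (1 - q) \<le> residual P q"
    unfolding q_def by (rule residual_at_closing_kink[OF fin P nd])
  have R0: "residual P 0 = 0" and R1: "residual P 1 = 0"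
    using P F_at_0 F_at_1 by (auto simp: residual_def tent_at_0 tent_at_1 intro!: sum.neutral)
  show ?thesis
  proof (cases "z < q")
    case True
    have "residual P z * q \<ge> residual P q * z"
      using residual_chord[OF fin P nd, of 0 q z] R0 True z q by simp
    moreover have "residual P q * z \<ge> q * (1 - q) * z" using Rq z by (intro mult_right_mono) auto
    ultimately have "q * ((1 - q) * z) \<le> q * residual P z" by (simp add: algebra_simps)
    then have "(1 - q) * z \<le> residual P z" using True z by (simp add: mult_le_cancel_left_pos)
    then show ?thesis by (simp add: q_def tent_def)
  next
    case False
    have "residual P z * (1 - q) \<ge> residual P q * (1 - z)"
      using residual_chord[OF fin P nd, of q 1 z] R1 False z q by simp
    moreover have "residual P q * (1 - z) \<ge> q * (1 - q) * (1 - z)" using Rq z by (intro mult_right_mono) auto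
    ultimately have "(1 - q) * (q * (1 - z)) \<le> (1 - q) * residual P z" by (simp add: algebra_simps)
    then have "q * (1 - z) \<le> residual P z" using q by (simp add: mult_le_cancel_left_pos)
    then show ?thesis by (simp add: q_def tent_def)
  qed
qed

end

theorem G_eq_tent_sum:
  assumes fin: "finite P" and P: "P \<subseteq> {0<..<1}" and z: "z \<in> {0..1}"
  shows "G 0 1 P z = tent_sum P z"
  unfolding G_def
proof (rule cInf_eq_minimum)
  show "tent_sum P z \<in> {F z |F. tropical_series 0 1 F \<and> (\<forall>p\<in>P. \<not> F differentiable at p)}"
    using tropical_series_tent_sum[OF fin P] tent_sum_not_differentiable[OF fin P] by blast
  fix y assume "y \<in> {F z |F. tropical_series 0 1 F \<and> (\<forall>p\<in>P. \<not> F differentiable at p)}"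
  then obtain F where y: "y = F z" and F: "tropical_series 0 1 F"
    and nd: "\<forall>p\<in>P. \<not> F differentiable at p" by blast
  from F obtain a where "\<forall>z\<in>{0..1}. bdd_below (range (\<lambda>v. a v + z * of_int v)) \<and>
      F z = (INF v. a v + z * of_int v)"
    unfolding tropical_series_def by blast
  with F interpret tropical_repr F a
    by unfold_locales (auto simp: tropical_series_def)
  show "tent_sum P z \<le> y"
    using tent_closing_kink_le_residual[OF fin P nd z] y by (simp add: tent_sum_def residual_def)
qed

section \<open>Adding one kink\<close>

lemma tent_add_tent_ne_iff:
  assumes p: "p > 0" and r: "r > 0" and q: "p + r = q" "q \<le> 1" and x: "x \<in> {0..1}"
  shows "tent p x + tent r x \<noteq> tent q x \<longleftrightarrow> x \<in> {0<..<q}"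
proof (cases "x \<in> {0<..<q}")
  case True
  then have x: "0 < x" "x < q" by auto
  have "(1 - q) * x < min ((1 - p) * x) (p * (1 - x)) + min ((1 - r) * x) (r * (1 - x))"
  proof -
    have e: "(1 - p) * x + (1 - r) * x - (1 - q) * x = x" "(1 - p) * x + r * (1 - x) - (1 - q) * x = r"
      "p * (1 - x) + (1 - r) * x - (1 - q) * x = p" "p * (1 - x) + r * (1 - x) - (1 - q) * x = q - x"
      by (simp_all add: q(1)[symmetric] algebra_simps)
    have "(1 - q) * x < (1 - p) * x + (1 - r) * x" using e(1) x(1) by linarith
    moreover have "(1 - q) * x < (1 - p) * x + r * (1 - x)" using e(2) r by linarith
    moreover have "(1 - q) * x < p * (1 - x) + (1 - r) * x" using e(3) p by linarith
    moreover have "(1 - q) * x < p * (1 - x) + r * (1 - x)" using e(4) x(2) by linarith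
    ultimately show ?thesis by (simp add: min_add_distrib_left min_add_distrib_right)
  qed
  moreover have "tent q x = (1 - q) * x" using x q by (simp add: tent_left)
  ultimately show ?thesis using True by (simp add: tent_def)
next
  case False
  then have "x = 0 \<or> q \<le> x" using x by auto
  then have "tent p x + tent r x = tent q x"
  proof
    assume "q \<le> x"
    then have "p \<le> x" "r \<le> x" using p r q by auto
    then have "tent p x + tent r x = (p + r) * (1 - x)" by (simp add: tent_right distrib_right)
    then show ?thesis using \<open>q \<le> x\<close> q by (simp add: tent_right)
  qed (use p r q in \<open>simp add: tent_at_0\<close>)
  then show ?thesis using False by simp
qed

lemma G_insert_ne_iff:
  assumes fin: "finite P" and P: "P \<subseteq> {0<..<1}" and b: "b \<in> {0<..<1}" "b \<notin> P"
    and x: "x \<in> {0..1}"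
  shows "G 0 1 (insert b P) x \<noteq> G 0 1 P x \<longleftrightarrow>
    tent b x + tent (frac (closing_kink P - b)) x \<noteq> tent (closing_kink P) x"
  using G_eq_tent_sum[OF fin P x] G_eq_tent_sum[of "insert b P" x] fin P b x
  by (simp add: tent_sum_def closing_kink_insert)

text \<open>For b > q the identity of tents is the mirror image, under x \<mapsto> 1 - x, of the
  case b < q.\<close>
theorem G_insert_change_set:
  assumes fin: "finite P" and P: "P \<subseteq> {0<..<1}" and b: "b \<in> {0<..<1}" "b \<notin> P"
    and ne: "b \<noteq> closing_kink P"
  shows "{x\<in>{0..1}. G 0 1 (insert b P) x \<noteq> G 0 1 P x} =
    (if b < closing_kink P then {0<..<closing_kink P} else {closing_kink P<..<1})"
proof -
  define q where "q = closing_kink P"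
  have q: "q \<in> {0..<1}" unfolding q_def by (rule closing_kink_range)
  have change: "G 0 1 (insert b P) x \<noteq> G 0 1 P x \<longleftrightarrow>
      (if b < q then x \<in> {0<..<q} else x \<in> {q<..<1})" if x: "x \<in> {0..1}" for x
  proof (cases "b < q")
    case True
    then have "frac (q - b) = q - b" using b q by (simp add: frac_eq)
    then show ?thesis
      using G_insert_ne_iff[OF fin P b x] tent_add_tent_ne_iff[of b "q - b" q x] True b q x
      by (simp add: q_def)
  next
    case False
    then have "q < b" using ne by (simp add: q_def)
    then have fr: "frac (q - b) = q - b + 1" using b q by (simp add: frac_unique_iff)
    have reflect: "tent c x = tent (1 - c) (1 - x)" for c
      using tent_reflect[of c "1 - x"] by simp
    have "tent (1 - b) (1 - x) + tent (b - q) (1 - x) \<noteq> tent (1 - q) (1 - x) \<longleftrightarrow>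
        1 - x \<in> {0<..<1 - q}"
      using b q \<open>q < b\<close> x by (intro tent_add_tent_ne_iff) auto
    then have "tent b x + tent (frac (q - b)) x \<noteq> tent q x \<longleftrightarrow> x \<in> {q<..<1}"
      using x q by (auto simp: reflect[of b] reflect[of q] reflect[of "q - b + 1"] fr)
    then show ?thesis using G_insert_ne_iff[OF fin P b x, folded q_def] False by simp
  qed
  show ?thesis unfolding q_def[symmetric]
  proof (rule set_eqI)
    show "x \<in> {x\<in>{0..1}. G 0 1 (insert b P) x \<noteq> G 0 1 P x} \<longleftrightarrow>
        x \<in> (if b < q then {0<..<q} else {q<..<1})" for x
      using change[of x] q by (cases "x \<in> {0..1}") auto
  qed
qed

section \<open>The length of the change interval for uniform points\<close>

abbreviation unif01 :: "real measure" where
  "unif01 \<equiv> uniform_measure lborel {0<..<1}"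

lemma prob_space_unif01: "prob_space unif01"
  by (rule prob_space_uniform_measure) auto

lemma nn_integral_unif01:
  "f \<in> borel_measurable borel \<Longrightarrow> (\<integral>\<^sup>+ x. f x \<partial>unif01) = (\<integral>\<^sup>+ x. f x * indicator {0<..<1} x \<partial>lborel)"
  by (subst nn_integral_uniform_measure) (auto simp: divide_ennreal_def)

lemma emeasure_unif01: "A \<in> sets borel \<Longrightarrow> emeasure unif01 A = emeasure lborel ({0<..<1} \<inter> A)"
  by (subst emeasure_uniform_measure) (auto simp: divide_ennreal_def)

lemma borel_measurable_frac [measurable]: "(frac :: real \<Rightarrow> real) \<in> borel_measurable borel"
  unfolding frac_def[abs_def] by measurable

text \<open>Reflection and rotation of the circle R/Z preserve the uniform distribution.\<close>
lemma nn_integral_unif01_frac_diff: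
  assumes [measurable]: "\<psi> \<in> borel_measurable borel"
  shows "(\<integral>\<^sup>+ y. \<psi> (frac (c - y)) \<partial>unif01) = (\<integral>\<^sup>+ y. \<psi> y \<partial>unif01)"
proof -
  define c0 where "c0 = frac c"
  have c0: "0 \<le> c0" "c0 < 1" unfolding c0_def by (auto simp: frac_lt_1)
  have frac_eq: "frac (c - y) = (if y \<le> c0 then c0 - y else c0 + 1 - y)" if "y \<in> {0<..<1}" for y
  proof -
    have "frac (c - y) = frac (of_int \<lfloor>c\<rfloor> + (c0 - y))" by (simp add: c0_def frac_def)
    also have "\<dots> = (if y \<le> c0 then c0 - y else c0 + 1 - y)"
      using that c0 by (auto simp: frac_unique_iff)
    finally show ?thesis .
  qed
  have reflect: "(\<integral>\<^sup>+ y. \<psi> (d - y) * indicator {l<..u} y \<partial>lborel) =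
      (\<integral>\<^sup>+ x. \<psi> x * indicator {d - u..<d - l} x \<partial>lborel)" for d l u
  proof -
    have "(\<integral>\<^sup>+ y. \<psi> (d - y) * indicator {l<..u} y \<partial>lborel) = ennreal \<bar>-1\<bar> *
        (\<integral>\<^sup>+ x. \<psi> (d - (d + (-1) * x)) * indicator {l<..u} (d + (-1) * x) \<partial>lborel)"
      by (rule nn_integral_real_affine) auto
    then show ?thesis by (simp, intro nn_integral_cong) (auto simp: indicator_def)
  qed
  have "(\<integral>\<^sup>+ y. \<psi> (frac (c - y)) \<partial>unif01) = (\<integral>\<^sup>+ y. \<psi> (frac (c - y)) * indicator {0<..<1} y \<partial>lborel)"
    by (rule nn_integral_unif01) measurable
  also have "\<dots> =
      (\<integral>\<^sup>+ y. \<psi> (c0 - y) * indicator {0<..c0} y + \<psi> (c0 + 1 - y) * indicator {c0<..1} y \<partial>lborel)"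
    using AE_lborel_singleton[of 1]
    by (intro nn_integral_cong_AE, eventually_elim) (use frac_eq c0 in \<open>auto simp: indicator_def\<close>)
  also have "\<dots> = (\<integral>\<^sup>+ x. \<psi> x * indicator {0..<c0} x \<partial>lborel) + (\<integral>\<^sup>+ x. \<psi> x * indicator {c0..<1} x \<partial>lborel)"
    by (subst nn_integral_add) (auto simp: reflect)
  also have "\<dots> = (\<integral>\<^sup>+ x. \<psi> x * indicator {0<..<1} x \<partial>lborel)"
  proof (subst nn_integral_add[symmetric], (measurable; fail)+, rule nn_integral_cong_AE)
    show "AE x in lborel. \<psi> x * indicator {0..<c0} x + \<psi> x * indicator {c0..<1} x =
        \<psi> x * indicator {0<..<1} x"
      using AE_lborel_singleton[of 0] by eventually_elim (use c0 in \<open>auto simp: indicator_def\<close>)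
  qed
  finally show ?thesis by (simp add: nn_integral_unif01)
qed

definition length_cdf :: "real \<Rightarrow> real" where
  "length_cdf t = (if t < 0 then 0 else (min t 1)\<^sup>2)"

text \<open>Distribution function of the length given the closing kink q: the length is q with
  probability q and 1 - q with probability 1 - q.\<close>
definition length_cdf_given :: "real \<Rightarrow> real \<Rightarrow> ennreal" where
  "length_cdf_given t q = ennreal q * indicator {..t} q + ennreal (1 - q) * indicator {1 - t..} q"

lemma length_cdf_given_measurable [measurable]: "length_cdf_given t \<in> borel_measurable borel"
  unfolding length_cdf_given_def by measurable

lemma nn_integral_length_cdf_given: "(\<integral>\<^sup>+ q. length_cdf_given t q \<partial>unif01) = ennreal (length_cdf t)"
proof -
  define \<tau> where "\<tau> = max 0 (min t 1)"
  have \<tau>: "0 \<le> \<tau>" "\<tau> \<le> 1" unfolding \<tau>_def by auto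
  have "(\<integral>\<^sup>+ q. length_cdf_given t q \<partial>unif01) =
      (\<integral>\<^sup>+ q. length_cdf_given t q * indicator {0<..<1} q \<partial>lborel)"
    by (rule nn_integral_unif01) measurable
  also have "\<dots> = (\<integral>\<^sup>+ q. ennreal q * indicator {0..\<tau>} q \<partial>lborel) +
      (\<integral>\<^sup>+ q. ennreal (1 - q) * indicator {1 - \<tau>..1} q \<partial>lborel)"
  proof (subst nn_integral_add[symmetric], (measurable; fail)+, rule nn_integral_cong_AE)
    show "AE q in lborel. length_cdf_given t q * indicator {0<..<1} q =
        ennreal q * indicator {0..\<tau>} q + ennreal (1 - q) * indicator {1 - \<tau>..1} q"
      using AE_lborel_singleton[of 0] AE_lborel_singleton[of 1]
      by eventually_elim (auto simp: length_cdf_given_def \<tau>_def indicator_def)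
  qed
  also have "\<dots> = ennreal (\<tau>\<^sup>2 / 2) + ennreal (\<tau>\<^sup>2 / 2)"
  proof -
    have "(\<integral>\<^sup>+ q. ennreal q * indicator {0..\<tau>} q \<partial>lborel) = ennreal (\<tau>\<^sup>2 / 2 - 0\<^sup>2 / 2)"
      using \<tau> by (intro nn_integral_FTC_Icc) (auto intro!: derivative_eq_intros)
    moreover have "(\<integral>\<^sup>+ q. ennreal (1 - q) * indicator {1 - \<tau>..1} q \<partial>lborel) =
        ennreal ((1 - 1\<^sup>2 / 2) - ((1 - \<tau>) - (1 - \<tau>)\<^sup>2 / 2))"
      using \<tau> by (intro nn_integral_FTC_Icc[where F="\<lambda>q. q - q\<^sup>2 / 2"]) (auto intro!: derivative_eq_intros)
    moreover have "(1 - 1\<^sup>2 / 2) - ((1 - \<tau>) - (1 - \<tau>)\<^sup>2 / 2) = \<tau>\<^sup>2 / 2 - 0\<^sup>2 / 2"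
      by (simp add: power2_eq_square field_simps)
    ultimately show ?thesis by (simp only:) simp
  qed
  also have "\<dots> = ennreal (length_cdf t)"
    using \<tau> by (simp add: length_cdf_def \<tau>_def flip: ennreal_plus)
  finally show ?thesis .
qed

lemma nn_integral_unif01_choice:
  assumes q: "q \<in> {0..1}"
  shows "(\<integral>\<^sup>+ y. indicator {..t} (if y < q then q else 1 - q) \<partial>unif01) = length_cdf_given t q"
proof -
  have "emeasure unif01 {..<q} = ennreal q"
  proof -
    have "{0<..<1} \<inter> {..<q} = {0<..<q}" using q by auto
    then show ?thesis using q by (simp add: emeasure_unif01 divide_ennreal_def)
  qed
  moreover have "emeasure unif01 {q..} = ennreal (1 - q)"
  proof -
    have "emeasure lborel ({0<..<1} \<inter> {q..}) = emeasure lborel {q..<1}"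
      using q AE_lborel_singleton[of 0]
      by (intro emeasure_eq_AE) (auto elim!: eventually_mono)
    then show ?thesis using q by (simp add: emeasure_unif01 divide_ennreal_def)
  qed
  moreover have "(\<integral>\<^sup>+ y. indicator {..t} (if y < q then q else 1 - q) \<partial>unif01) =
      (\<integral>\<^sup>+ y. indicator {..t} q * indicator {..<q} y + indicator {..t} (1 - q) * indicator {q..} y \<partial>unif01)"
    by (intro nn_integral_cong) (auto simp: indicator_def)
  moreover have "\<dots> = indicator {..t} q * emeasure unif01 {..<q} + indicator {..t} (1 - q) * emeasure unif01 {q..}"
    by (subst nn_integral_add) (auto simp: nn_integral_cmult_indicator)
  ultimately show ?thesis by (simp only:) (simp add: length_cdf_given_def indicator_def mult.commute)
qed

interpretation unif01_prod: product_sigma_finite "\<lambda>_::nat. unif01"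
  by (simp add: product_sigma_finite_def prob_space_imp_sigma_finite prob_space_unif01)

lemma prob_space_PiM_unif01: "prob_space (PiM I (\<lambda>_::nat. unif01))"
  by (rule prob_space_PiM) (rule prob_space_unif01)

lemma nn_integral_PiM_frac_neg_sum:
  fixes I :: "nat set"
  assumes fin: "finite I" and i: "i \<in> I" and [measurable]: "\<psi> \<in> borel_measurable borel"
  shows "(\<integral>\<^sup>+ x. \<psi> (frac (- (\<Sum>j\<in>I. x j))) \<partial>PiM I (\<lambda>_. unif01)) = (\<integral>\<^sup>+ y. \<psi> y \<partial>unif01)"
proof -
  define J where "J = I - {i}"
  have I: "I = insert i J" "i \<notin> J" "finite J" using i fin by (auto simp: J_def)
  have "(\<integral>\<^sup>+ x. \<psi> (frac (- (\<Sum>j\<in>I. x j))) \<partial>PiM I (\<lambda>_. unif01)) =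
      (\<integral>\<^sup>+ x. (\<integral>\<^sup>+ y. \<psi> (frac (- (\<Sum>j\<in>I. (x(i := y)) j))) \<partial>unif01) \<partial>PiM J (\<lambda>_. unif01))"
    unfolding I(1) by (rule unif01_prod.product_nn_integral_insert[OF I(3,2)]) measurable
  also have "\<dots> = (\<integral>\<^sup>+ x. (\<integral>\<^sup>+ y. \<psi> y \<partial>unif01) \<partial>PiM J (\<lambda>_. unif01))"
  proof (rule nn_integral_cong)
    fix x :: "nat \<Rightarrow> real"
    have "(\<Sum>j\<in>J. (x(i := y)) j) = (\<Sum>j\<in>J. x j)" for y
      using I by (intro sum.cong) auto
    then have "(\<Sum>j\<in>I. (x(i := y)) j) = y + (\<Sum>j\<in>J. x j)" for y
      using I by simp
    then have "- (\<Sum>j\<in>I. (x(i := y)) j) = - (\<Sum>j\<in>J. x j) - y" for y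
      by simp
    then show "(\<integral>\<^sup>+ y. \<psi> (frac (- (\<Sum>j\<in>I. (x(i := y)) j))) \<partial>unif01) = (\<integral>\<^sup>+ y. \<psi> y \<partial>unif01)"
      by (simp add: nn_integral_unif01_frac_diff)
  qed
  also have "\<dots> = (\<integral>\<^sup>+ y. \<psi> y \<partial>unif01)"
    using prob_space.emeasure_space_1[OF prob_space_PiM_unif01] by simp
  finally show ?thesis .
qed

definition interval_length :: "nat \<Rightarrow> (nat \<Rightarrow> real) \<Rightarrow> real" where
  "interval_length n p =
    (let q = frac (- (\<Sum>i=1..n. p i)) in if p (n + 1) < q then q else 1 - q)"

lemma interval_length_measurable [measurable]:
  "interval_length n \<in> borel_measurable (PiM {1..n+1} (\<lambda>_. unif01))"
  unfolding interval_length_def Let_def by measurable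

lemma emeasure_interval_length_le:
  assumes n: "n \<ge> 1"
  shows "emeasure (PiM {1..n+1} (\<lambda>_. unif01)) {p \<in> space (PiM {1..n+1} (\<lambda>_. unif01)). interval_length n p \<le> t}
    = ennreal (length_cdf t)"
proof -
  define Q where "Q p = frac (- (\<Sum>i=1..n. p i))" for p :: "nat \<Rightarrow> real"
  have I: "{1..n+1} = insert (n+1) {1..n}" by auto
  have A: "{p \<in> space (PiM {1..n+1} (\<lambda>_. unif01)). interval_length n p \<le> t} \<in> sets (PiM {1..n+1} (\<lambda>_. unif01))"
    by measurable
  have "emeasure (PiM {1..n+1} (\<lambda>_. unif01)) {p \<in> space (PiM {1..n+1} (\<lambda>_. unif01)). interval_length n p \<le> t}
      = (\<integral>\<^sup>+ p. indicator {..t} (interval_length n p) \<partial>PiM {1..n+1} (\<lambda>_. unif01))"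
    by (subst nn_integral_indicator[OF A, symmetric]) (auto intro!: nn_integral_cong simp: indicator_def)
  also have "\<dots> = (\<integral>\<^sup>+ x. (\<integral>\<^sup>+ y. indicator {..t} (interval_length n (x(n+1 := y))) \<partial>unif01)
      \<partial>PiM {1..n} (\<lambda>_. unif01))"
  proof -
    have "(\<lambda>p. indicator {..t} (interval_length n p)) \<in>
        borel_measurable (PiM (insert (n+1) {1..n}) (\<lambda>_. unif01))"
      unfolding I[symmetric] by measurable
    then show ?thesis unfolding I by (rule unif01_prod.product_nn_integral_insert[rotated 2]) auto
  qed
  also have "\<dots> = (\<integral>\<^sup>+ x. length_cdf_given t (Q x) \<partial>PiM {1..n} (\<lambda>_. unif01))"
  proof (rule nn_integral_cong)
    fix x :: "nat \<Rightarrow> real"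
    have "interval_length n (x(n+1 := y)) = (if y < Q x then Q x else 1 - Q x)" for y
      unfolding interval_length_def Q_def by (simp add: sum.cong[of "{1..n}" _ "x(n+1 := y)" x])
    then show "(\<integral>\<^sup>+ y. indicator {..t} (interval_length n (x(n+1 := y))) \<partial>unif01) = length_cdf_given t (Q x)"
      using nn_integral_unif01_choice[of "Q x" t] by (simp add: Q_def frac_lt_1 less_imp_le)
  qed
  also have "\<dots> = ennreal (length_cdf t)"
    unfolding Q_def using n
    by (simp add: nn_integral_PiM_frac_neg_sum[of _ 1] nn_integral_length_cdf_given)
  finally show ?thesis .
qed

lemma AE_PiM_coord_ne:
  fixes I :: "nat set"
  assumes fin: "finite I" and i: "i \<in> I"
    and g[measurable]: "g \<in> borel_measurable (PiM I (\<lambda>_. unif01))"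
    and g_indep: "\<And>x y. g (x(i := y)) = g x"
  shows "AE p in PiM I (\<lambda>_. unif01). p i \<noteq> g p"
proof -
  define N where "N = {p \<in> space (PiM I (\<lambda>_. unif01)). p i = g p}"
  have N: "N \<in> sets (PiM I (\<lambda>_. unif01))" unfolding N_def using i by measurable
  have I: "I = insert i (I - {i})" using i by auto
  have "emeasure (PiM I (\<lambda>_. unif01)) N = (\<integral>\<^sup>+ p. indicator N p \<partial>PiM (insert i (I - {i})) (\<lambda>_. unif01))"
    using N I[symmetric] by simp
  also have "\<dots> = (\<integral>\<^sup>+ x. (\<integral>\<^sup>+ y. indicator N (x(i := y)) \<partial>unif01) \<partial>PiM (I - {i}) (\<lambda>_. unif01))"
    by (rule unif01_prod.product_nn_integral_insert) (use fin N I in \<open>auto simp flip: I\<close>)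
  also have "\<dots> = (\<integral>\<^sup>+ x. 0 \<partial>PiM (I - {i}) (\<lambda>_. unif01))"
  proof (rule nn_integral_cong)
    fix x assume x: "x \<in> space (PiM (I - {i}) (\<lambda>_. unif01))"
    have "(\<integral>\<^sup>+ y. indicator N (x(i := y)) \<partial>unif01) = (\<integral>\<^sup>+ y. indicator {g x} y \<partial>unif01)"
    proof (rule nn_integral_cong)
      fix y
      have "x(i := y) \<in> space (PiM I (\<lambda>_. unif01))"
        using x i by (auto simp: space_PiM PiE_def extensional_def)
      then show "indicator N (x(i := y)) = indicator {g x} y"
        unfolding N_def using g_indep by (auto simp: indicator_def)
    qed
    also have "\<dots> = 0" by (simp add: emeasure_unif01 emeasure_lborel_countable)
    finally show "(\<integral>\<^sup>+ y. indicator N (x(i := y)) \<partial>unif01) = 0" .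
  qed
  finally have "emeasure (PiM I (\<lambda>_. unif01)) N = 0" by simp
  then show ?thesis by (subst AE_iff_measurable[OF N]) (auto simp: N_def)
qed

lemma measurable_completion_AE_eq:
  assumes g: "g \<in> M \<rightarrow>\<^sub>M N" and ae: "AE x in M. f x = g x"
    and f: "\<And>x. x \<in> space M \<Longrightarrow> f x \<in> space N"
  shows "f \<in> completion M \<rightarrow>\<^sub>M N"
proof (rule measurableI)
  show "x \<in> space (completion M) \<Longrightarrow> f x \<in> space N" for x using f by simp
  fix A assume A: "A \<in> sets N"
  from ae obtain N0 where N0: "{x \<in> space M. f x \<noteq> g x} \<subseteq> N0" "emeasure M N0 = 0" "N0 \<in> sets M"
    by (auto elim: AE_E)
  have "(g -` A \<inter> space M) - N0 \<in> sets (completion M)"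
    using g A N0(3) by (intro sets_completionI_sets) (auto intro!: sets.Diff measurable_sets)
  moreover have "N0 \<in> null_sets (completion M)" using N0 by (intro null_sets_completionI) auto
  then have "(f -` A \<inter> space M) \<inter> N0 \<in> null_sets (completion M)"
    by (rule null_sets_completion_subset[rotated]) auto
  moreover have "f -` A \<inter> space (completion M) = ((g -` A \<inter> space M) - N0) \<union> ((f -` A \<inter> space M) \<inter> N0)"
    using N0(1) by auto
  ultimately show "f -` A \<inter> space (completion M) \<in> sets (completion M)" by (metis null_setsD2 sets.Un)
qed

lemma distributed_completion_AE_eq:
  assumes "distributed M N Y f" and ae: "AE x in M. X x = Y x"
    and X: "\<And>x. x \<in> space M \<Longrightarrow> X x \<in> space N"
  shows "distributed (completion M) N X f"
proof -
  have Y: "Y \<in> M \<rightarrow>\<^sub>M N" and f: "f \<in> borel_measurable N" and d: "distr M N Y = density N f"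
    using assms(1) by (auto simp: distributed_def)
  have X_meas: "X \<in> completion M \<rightarrow>\<^sub>M N" by (rule measurable_completion_AE_eq[OF Y ae X])
  have "distr (completion M) N X = distr (completion M) N Y"
    using X_meas Y by (intro distr_cong_AE AE_completion[OF ae]) (auto simp: measurable_completion)
  also have "\<dots> = density N f" using Y d by (simp add: distr_completion)
  finally show ?thesis using X_meas f by (simp add: distributed_def)
qed

lemma cdf_density_2x: "cdf (density lborel (\<lambda>x. ennreal (2 * x) * indicator {0..1} x)) t = length_cdf t"
proof -
  have "emeasure (density lborel (\<lambda>x. ennreal (2 * x) * indicator {0..1} x)) {..t} =
      (\<integral>\<^sup>+ x. ennreal (2 * x) * indicator {0..max 0 (min t 1)} x \<partial>lborel)"
    by (subst emeasure_density) (auto intro!: nn_integral_cong simp: indicator_def)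
  also have "\<dots> = ennreal ((max 0 (min t 1))\<^sup>2 - 0\<^sup>2)"
    by (intro nn_integral_FTC_Icc) (auto intro!: derivative_eq_intros)
  finally show ?thesis by (simp add: cdf_def measure_def length_cdf_def)
qed

lemma real_distribution_density_2x:
  "real_distribution (density lborel (\<lambda>x. ennreal (2 * x) * indicator {0..1} x))"
proof -
  have "(\<integral>\<^sup>+ x. ennreal (2 * x) * indicator {0..1} x \<partial>lborel) = ennreal (1\<^sup>2 - 0\<^sup>2)"
    by (intro nn_integral_FTC_Icc) (auto intro!: derivative_eq_intros)
  then have "emeasure (density lborel (\<lambda>x. ennreal (2 * x) * indicator {0..1} x)) UNIV = 1"
    by (subst emeasure_density) auto
  then show ?thesis
    by (auto simp: real_distribution_def real_distribution_axioms_def intro!: prob_spaceI)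
qed

theorem distributed_interval_length:
  assumes n: "n \<ge> 1"
  shows "distributed (PiM {1..n+1} (\<lambda>_. unif01)) lborel (interval_length n)
    (\<lambda>x. ennreal (2 * x) * indicator {0..1} x)"
proof -
  define M where "M = PiM {1..n+1} (\<lambda>_::nat. unif01)"
  interpret M: prob_space M unfolding M_def by (rule prob_space_PiM_unif01)
  have Y: "interval_length n \<in> M \<rightarrow>\<^sub>M lborel" unfolding M_def by measurable
  have rd: "real_distribution (distr M lborel (interval_length n))"
    using M.prob_space_distr[OF Y] by (simp add: real_distribution_def real_distribution_axioms_def)
  have cdf: "cdf (distr M lborel (interval_length n)) t = length_cdf t" for t
  proof -
    have "cdf (distr M lborel (interval_length n)) t = measure M {p \<in> space M. interval_length n p \<le> t}"
      unfolding cdf_def using Y by (subst measure_distr) (auto intro: arg_cong[where f="measure M"])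
    also have "\<dots> = length_cdf t"
      using emeasure_interval_length_le[OF n, of t] by (simp add: M_def measure_def length_cdf_def)
    finally show ?thesis .
  qed
  have "distr M lborel (interval_length n) = density lborel (\<lambda>x. ennreal (2 * x) * indicator {0..1} x)"
    by (rule cdf_unique[OF rd real_distribution_density_2x]) (simp add: fun_eq_iff cdf cdf_density_2x)
  then show ?thesis using Y by (simp add: distributed_def M_def)
qed

lemma change_set_indexed:
  fixes p :: "nat \<Rightarrow> real"
  assumes p01: "\<forall>i\<in>{1..n+1}. p i \<in> {0<..<1}" and inj: "inj_on p {1..n+1}"
    and ne: "p (n+1) \<noteq> frac (- (\<Sum>i=1..n. p i))"
  shows "{x\<in>{0..1}. G 0 1 (p ` {1..n+1}) x \<noteq> G 0 1 (p ` {1..n}) x} =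
    (if p (n+1) < frac (- (\<Sum>i=1..n. p i)) then {0<..<frac (- (\<Sum>i=1..n. p i))}
     else {frac (- (\<Sum>i=1..n. p i))<..<1})"
proof -
  define P where "P = p ` {1..n}"
  have P: "finite P" "P \<subseteq> {0<..<1}" using p01 by (auto simp: P_def)
  have q: "closing_kink P = frac (- (\<Sum>i=1..n. p i))"
    using inj by (simp add: P_def closing_kink_def sum.reindex inj_on_subset[of _ "{1..n+1}"])
  have insert: "p ` {1..n+1} = insert (p (n+1)) P"
    by (simp add: P_def atLeastAtMostSuc_conv image_insert)
  have b: "p (n+1) \<in> {0<..<1}" "p (n+1) \<notin> P"
    using p01 by (auto simp: P_def inj_on_image_mem_iff[OF inj])
  show ?thesis
    unfolding insert P_def[symmetric] q[symmetric] using ne q by (intro G_insert_change_set[OF P b]) simp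
qed

lemma AE_change_set_measure:
  assumes n: "n \<ge> 1"
  shows "AE p in PiM {1..n+1} (\<lambda>_. unif01).
    measure lborel {x\<in>{0..1}. G 0 1 (p ` {1..n+1}) x \<noteq> G 0 1 (p ` {1..n}) x} = interval_length n p"
proof -
  have coords: "AE p in PiM {1..n+1} (\<lambda>_. unif01). \<forall>i\<in>{1..n+1}. p i \<in> {0<..<1}"
  proof (rule AE_finite_allI)
    show "AE p in PiM {1..n+1} (\<lambda>_. unif01). p i \<in> {0<..<1}" if "i \<in> {1..n+1}" for i
      using AE_uniform_measureI[of "{0<..<1::real}" lborel] that
      by (intro AE_PiM_component[OF prob_space_unif01]) auto
  qed simp
  have distinct: "AE p in PiM {1..n+1} (\<lambda>_. unif01). inj_on p {1..n+1}"
  proof -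
    have "AE p in PiM {1..n+1} (\<lambda>_. unif01). \<forall>i\<in>{1..n+1}. \<forall>j\<in>{1..n+1}. i \<noteq> j \<longrightarrow> p i \<noteq> p j"
      by (intro AE_finite_allI AE_impI AE_PiM_coord_ne[where g="\<lambda>p. p _"]) auto
    then show ?thesis by eventually_elim (auto simp: inj_on_def)
  qed
  have avoid: "AE p in PiM {1..n+1} (\<lambda>_. unif01). p (n+1) \<noteq> frac (- (\<Sum>i=1..n. p i))"
    by (rule AE_PiM_coord_ne) auto
  from coords distinct avoid show ?thesis
  proof eventually_elim
    case (elim p)
    have "frac (- (\<Sum>i=1..n. p i)) \<in> {0..<1}" by (simp add: frac_lt_1)
    then show ?case
      using change_set_indexed[OF elim] by (simp add: interval_length_def Let_def)
  qed
qed

theorem mainTheorem7: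
  fixes n :: nat
  assumes "n \<ge> 1"
  shows "(\<forall>p :: nat \<Rightarrow> real.
            (\<forall>i\<in>{1..n+1}. p i \<in> {0<..<1}) \<and> inj_on p {1..n+1} \<and>
            p (n+1) \<noteq> frac (- (\<Sum>i=1..n. p i)) \<longrightarrow>
            (let q = frac (- (\<Sum>i=1..n. p i));
                 I = {x\<in>{0..1}. G 0 1 (p ` {1..n+1}) x \<noteq> G 0 1 (p ` {1..n}) x}
             in (p (n+1) < q \<longrightarrow> I = {0<..<q}) \<and> (p (n+1) > q \<longrightarrow> I = {q<..<1})))
       \<and> distributed (completion (PiM {1..n+1} (\<lambda>_. uniform_measure lborel {0<..<(1::real)})))
           lborel
           (\<lambda>p. measure lborel {x\<in>{0..1}. G 0 1 (p ` {1..n+1}) x \<noteq> G 0 1 (p ` {1..n}) x})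
           (\<lambda>x. ennreal (2 * x) * indicator {0..1} x)"
proof (intro conjI allI impI)
  fix p :: "nat \<Rightarrow> real"
  assume "(\<forall>i\<in>{1..n+1}. p i \<in> {0<..<1}) \<and> inj_on p {1..n+1} \<and> p (n+1) \<noteq> frac (- (\<Sum>i=1..n. p i))"
  then show "let q = frac (- (\<Sum>i=1..n. p i));
      I = {x\<in>{0..1}. G 0 1 (p ` {1..n+1}) x \<noteq> G 0 1 (p ` {1..n}) x}
    in (p (n+1) < q \<longrightarrow> I = {0<..<q}) \<and> (p (n+1) > q \<longrightarrow> I = {q<..<1})"
    using change_set_indexed[of n p] by (simp add: Let_def)
next
  show "distributed (completion (PiM {1..n+1} (\<lambda>_. uniform_measure lborel {0<..<(1::real)}))) lborel
      (\<lambda>p. measure lborel {x\<in>{0..1}. G 0 1 (p ` {1..n+1}) x \<noteq> G 0 1 (p ` {1..n}) x})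
      (\<lambda>x. ennreal (2 * x) * indicator {0..1} x)"
    using distributed_interval_length[OF assms] AE_change_set_measure[OF assms]
    by (rule distributed_completion_AE_eq) simp
qed

end
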